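(* Let $\mathcal B$ be a binomial class of reluctant functions and suppose there is a delta operator $\mathfrak d$ on $\mathbb Q[x]$ whose basic sequence $(p_n(x))_{n\ge0}$ satisfies $|F(S,X)|=p_n(|X|)$ whenever $|S|=n$ (for all finite disjoint $S,X$). Let $x$ be a positive integer, $n\ge0$, and $\mathcal Z=(z_i)_{i\ge0}$ a sequence of integers with $1\le z_0\le z_1\le\cdots\le z_{n-1}\le x$ (the remaining terms arbitrary). Then $$ord(z_0,\dots,z_{n-1})=t_n\big(x;\mathfrak d,(x-z_i)_{i\ge0}\big)=t_n\big(0;\mathfrak d,(-z_i)_{i\ge0}\big),$$ i.e. $t_n(0;\mathfrak d,-\mathcal Z)$ counts the reluctant functions in $\mathcal B$ from an $n$-element set to $\{1,\dots,x\}$ whose order statistics are bounded by $\mathcal Z$.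
   Context: For finite disjoint sets $S,X$, a reluctant function from $S$ to $X$ is a map $f:S\to S\cup X$ such that for every $s\in S$ some iterate $f^k(s)$, $k\ge1$, lies in $X$; this element is the final image of $s$. A binomial class $\mathcal B$ assigns to each pair $(S,X)$ of finite disjoint sets a set $F(S,X)$ of reluctant functions from $S$ to $X$, compatible with bijections of $S$ and $X$, such that for disjoint $X,Y$ the map $f\mapsto(f_A,f_{S\setminus A})$ ($A$ = elements whose final image is in $X$; restrictions) is a bijection from $F(S,X\cup Y)$ onto $\bigsqcup_{A\subseteq S}F(A,X)\times F(S\setminus A,Y)$. For $S=\{s_0,\dots,s_{n-1}\}$, $X=\{1,\dots,x\}$, $f\in F(S,X)$, let $x_i$ be the final image of $s_i$ and $x_{(0)}\le\cdots\le x_{(n-1)}$ its nondecreasing rearrangement; $ord(z_0,\dots,z_{n-1})$ is the number of $f\in F(S,X)$ with $x_{(j)}\le z_j$ for all $j$. A delta operator is a linear operator $\mathfrak d$ on $\mathbb Q[x]$ commuting with all shifts $f(x)\mapsto f(x+a)$ and with $\mathfrak d(x)$ a nonzero constant; its basic sequence is the unique $(p_n)$ with $\deg p_n=n$, $p_0=1$, $p_n(0)=0$ ($n\ge1$), $\mathfrak dp_n=np_{n-1}$. $t_n(x;\mathfrak d,\mathcal W)$ denotes the $n$-th term of the generalized Gončarov basis associated with $(\mathfrak d,\mathcal W)$ for a sequence $\mathcal W=(w_i)_{i\ge0}$: the unique sequence $(t_n)_{n\ge0}$ with $\deg t_n=n$ and $\mathfrak d^{\,i}(t_n)$ evaluated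 at $w_i$ equal to $n!\,\delta_{i,n}$ for all $i,n$. *)

theory Defs
  imports "HOL-Library.FuncSet" "HOL-Computational_Algebra.Polynomial"
begin

text \<open>Universe of finite sets: finite subsets of nat. Maps are extensional
  (value undefined outside the domain S).\<close>

definition reluctant :: "nat set \<Rightarrow> nat set \<Rightarrow> (nat \<Rightarrow> nat) \<Rightarrow> bool" where
  "reluctant S X f \<longleftrightarrow> f \<in> S \<rightarrow>\<^sub>E S \<union> X \<and> (\<forall>s\<in>S. \<exists>k\<ge>1. (f ^^ k) s \<in> X)"

definition final_image :: "(nat \<Rightarrow> nat) \<Rightarrow> nat set \<Rightarrow> nat \<Rightarrow> nat" where
  "final_image f X s = (f ^^ (LEAST k. k \<ge> 1 \<and> (f ^^ k) s \<in> X)) s"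

definition binomial_class :: "(nat set \<Rightarrow> nat set \<Rightarrow> (nat \<Rightarrow> nat) set) \<Rightarrow> bool" where
  "binomial_class F \<longleftrightarrow>
    (\<forall>S X. finite S \<and> finite X \<and> S \<inter> X = {} \<longrightarrow> (\<forall>f\<in>F S X. reluctant S X f)) \<and>
    (\<forall>S X S' X' \<phi>. finite S \<and> finite X \<and> S \<inter> X = {} \<and> finite S' \<and> finite X' \<and> S' \<inter> X' = {}
        \<and> bij_betw \<phi> S S' \<and> bij_betw \<phi> X X' \<longrightarrow>
        F S' X' = (\<lambda>f. restrict (\<phi> \<circ> f \<circ> inv_into S \<phi>) S') ` F S X) \<and>
    (\<forall>S X Y. finite S \<and> finite X \<and> finite Y \<and> S \<inter> X = {} \<and> S \<inter> Y = {} \<and> X \<inter> Y = {} \<longrightarrow>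
        bij_betw (\<lambda>f. let A = {s\<in>S. final_image f (X \<union> Y) s \<in> X}
                       in (A, restrict f A, restrict f (S - A)))
          (F S (X \<union> Y)) (SIGMA A:Pow S. F A X \<times> F (S - A) Y))"

definition delta_operator :: "(rat poly \<Rightarrow> rat poly) \<Rightarrow> bool" where
  "delta_operator d \<longleftrightarrow>
    (\<forall>p q. d (p + q) = d p + d q) \<and> (\<forall>c p. d (smult c p) = smult c (d p)) \<and>
    (\<forall>a p. d (pcompose p [:a, 1:]) = pcompose (d p) [:a, 1:]) \<and>
    (\<exists>c. c \<noteq> 0 \<and> d [:0, 1:] = [:c:])"

definition basic_sequence :: "(rat poly \<Rightarrow> rat poly) \<Rightarrow> (nat \<Rightarrow> rat poly) \<Rightarrow> bool" where
  "basic_sequence d p \<longleftrightarrow>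
    (\<forall>n. degree (p n) = n) \<and> p 0 = 1 \<and> (\<forall>n\<ge>1. poly (p n) 0 = 0) \<and>
    (\<forall>n\<ge>1. d (p n) = smult (of_nat n) (p (n - 1)))"

definition goncarov_basis :: "(rat poly \<Rightarrow> rat poly) \<Rightarrow> (nat \<Rightarrow> rat) \<Rightarrow> nat \<Rightarrow> rat poly" where
  "goncarov_basis d w = (THE t. \<forall>n. degree (t n) = n \<and>
      (\<forall>i. poly ((d ^^ i) (t n)) (w i) = (if i = n then fact n else 0)))"

definition ord_count :: "(nat set \<Rightarrow> nat set \<Rightarrow> (nat \<Rightarrow> nat) set) \<Rightarrow> nat set \<Rightarrow> nat set
    \<Rightarrow> (nat \<Rightarrow> int) \<Rightarrow> nat" where
  "ord_count F S X z = card {f \<in> F S X. \<forall>j < card S.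
      int (sort (map (final_image f X) (sorted_list_of_set S)) ! j) \<le> z j}"

end

(*
  Every f in F(S, {1..x}) either satisfies all bounds x_(j) <= z_j, or there is a first index k
  with x_(k) > z_k.  Since z is nondecreasing, exactly k points then have final image in
  {1..z_k}, and the binomial property splits f into a function on these k points into {1..z_k}
  that obeys the bounds z_0, ..., z_(k-1), and an arbitrary function on the other n - k points
  into {z_k + 1..x}.  Counting gives
    p_n(x) = ord_n(z) + sum_{k<n} (n choose k) ord_k(z) p_(n-k)(x - z_k).
  The Goncarov basis t_k for the nodes w_k = x - z_k satisfies the same recursion
    p_n = t_n + sum_{k<n} (n choose k) p_(n-k)(w_k) t_k,
  and shift invariance of the delta operator gives t_k(x; x - z) = t_k(0; -z), so induction
  on n identifies ord_n(z) with t_n(0; -z).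
*)

theory Submission
  imports Defs
begin

lemma delta_operator_add: "delta_operator d \<Longrightarrow> d (a + b) = d a + d b"
  by (simp add: delta_operator_def)

lemma delta_operator_smult: "delta_operator d \<Longrightarrow> d (smult c a) = smult c (d a)"
  by (simp add: delta_operator_def)

lemma delta_operator_shift:
  "delta_operator d \<Longrightarrow> d (pcompose q [:a, 1:]) = pcompose (d q) [:a, 1:]"
  by (simp add: delta_operator_def)

lemma delta_operator_diff: "delta_operator d \<Longrightarrow> d (a - b) = d a - d b"
  using delta_operator_add[of d "a - b" b] by simp

lemma delta_operator_const:
  assumes "delta_operator d"
  shows "d [:c:] = 0"
proof -
  obtain e where e: "d [:0, 1:] = [:e:]"
    using assms by (auto simp: delta_operator_def)
  have "pcompose [:0, 1:] [:1, 1:] = [:0, 1:] + (1 :: rat poly)"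
    by (simp add: pcompose_pCons one_pCons)
  then have "d [:0, 1:] + d 1 = d (pcompose [:0, 1:] [:1, 1:])"
    using delta_operator_add[OF assms] by simp
  also have "\<dots> = d [:0, 1:]"
    using delta_operator_shift[OF assms, of "[:0, 1:]" 1] e by (simp add: pcompose_pCons)
  finally have "d 1 = 0" by simp
  then show ?thesis
    using delta_operator_smult[OF assms, of c 1] by simp
qed

lemma delta_operator_degree_0: "delta_operator d \<Longrightarrow> degree q = 0 \<Longrightarrow> d q = 0"
  by (metis degree_0_id delta_operator_const)

lemma delta_pow_add: "delta_operator d \<Longrightarrow> (d^^k) (a + b) = (d^^k) a + (d^^k) b"
  by (induction k) (auto simp: delta_operator_add)

lemma delta_pow_diff: "delta_operator d \<Longrightarrow> (d^^k) (a - b) = (d^^k) a - (d^^k) b"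
  by (induction k) (auto simp: delta_operator_diff)

lemma delta_pow_smult: "delta_operator d \<Longrightarrow> (d^^k) (smult c a) = smult c ((d^^k) a)"
  by (induction k) (auto simp: delta_operator_smult)

lemma delta_pow_shift:
  "delta_operator d \<Longrightarrow> (d^^k) (pcompose q [:a, 1:]) = pcompose ((d^^k) q) [:a, 1:]"
  by (induction k) (auto simp: delta_operator_shift)

lemma delta_pow_sum:
  assumes "delta_operator d"
  shows "(d^^k) (\<Sum>i\<in>A. f i) = (\<Sum>i\<in>A. (d^^k) (f i))"
  using delta_pow_diff[OF assms, of k 0 0]
  by (induction A rule: infinite_finite_induct) (simp_all add: delta_pow_add[OF assms])

text \<open>The recursion is the Goncarov expansion of \<open>p n\<close>, whose coefficient along the \<open>i\<close>-th
  basis polynomial is \<open>((d^^i) (p n))(w i) / i! = (n choose i) * p (n - i) (w i)\<close>.\<close>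

fun goncarov_rec :: "(nat \<Rightarrow> rat poly) \<Rightarrow> (nat \<Rightarrow> rat) \<Rightarrow> nat \<Rightarrow> rat poly" where
  "goncarov_rec p w n =
     p n - (\<Sum>i<n. smult (of_nat (n choose i) * poly (p (n - i)) (w i)) (goncarov_rec p w i))"

declare goncarov_rec.simps [simp del]

locale delta_basic_sequence =
  fixes d :: "rat poly \<Rightarrow> rat poly" and p :: "nat \<Rightarrow> rat poly"
  assumes delta: "delta_operator d" and basic: "basic_sequence d p"
begin

lemma degree_p [simp]: "degree (p n) = n"
  using basic by (simp add: basic_sequence_def)

lemma p_0: "p 0 = 1"
  using basic by (simp add: basic_sequence_def)

lemma delta_p: "0 < n \<Longrightarrow> d (p n) = smult (of_nat n) (p (n - 1))"
  using basic by (simp add: basic_sequence_def)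

lemma p_neq_0: "p n \<noteq> 0"
  using p_0 degree_p[of n] by (metis degree_0 zero_neq_one)

lemma lead_coeff_p_neq_0 [simp]: "coeff (p n) n \<noteq> 0"
  by (metis degree_p leading_coeff_0_iff p_neq_0)

text \<open>Subtracting the multiple of \<open>p (degree q)\<close> with the same leading coefficient lowers the
  degree, and \<open>d (p m) = m * p (m - 1)\<close> supplies the leading term of \<open>d q\<close>.\<close>

lemma delta_neq_0_and_degree:
  assumes "0 < degree q"
  shows "d q \<noteq> 0 \<and> degree (d q) = degree q - 1"
  using assms
proof (induction "degree q" arbitrary: q rule: less_induct)
  case less
  define m where "m = degree q"
  define c where "c = lead_coeff q / lead_coeff (p m)"
  define r where "r = q - smult c (p m)"
  have "m > 0" "c \<noteq> 0"
    using less.prems by (auto simp: m_def c_def)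
  have "degree r < m"
  proof (rule degree_lessI)
    show "\<forall>k\<ge>m. coeff r k = 0"
      by (auto simp: r_def c_def m_def coeff_eq_0 le_less)
  qed (use \<open>m > 0\<close> in simp)
  then have dr: "d r = 0 \<or> degree (d r) < m - 1"
    using less.hyps[of r] delta_operator_degree_0[OF delta, of r]
    by (cases "degree r = 0") (auto simp: m_def)
  have dq: "d q = smult (c * of_nat m) (p (m - 1)) + d r"
    by (simp add: r_def delta_operator_diff[OF delta] delta_operator_smult[OF delta]
        delta_p[OF \<open>m > 0\<close>])
  have "coeff (d r) (m - 1) = 0"
    using dr by (auto simp: coeff_eq_0)
  then have "coeff (d q) (m - 1) \<noteq> 0"
    using \<open>m > 0\<close> \<open>c \<noteq> 0\<close> by (simp add: dq)
  moreover have "degree (d q) \<le> m - 1"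
    using dr unfolding dq by (auto intro!: degree_add_le)
  ultimately show ?case
    using le_degree by (fastforce simp: m_def)
qed

lemma degree_delta: "degree (d q) = degree q - 1"
  using delta_neq_0_and_degree[of q] delta_operator_degree_0[OF delta, of q] by fastforce

lemma degree_delta_pow: "degree ((d^^k) q) = degree q - k"
  by (induction k) (auto simp: degree_delta)

lemma delta_pow_eq_0: "degree q < k \<Longrightarrow> (d^^k) q = 0"
proof (induction k)
  case (Suc k)
  show ?case
  proof (cases "degree q < k")
    case True
    then show ?thesis
      using Suc.IH delta_operator_degree_0[OF delta, of 0] by simp
  next
    case False
    then have "degree ((d^^k) q) = 0"
      using Suc.prems by (simp add: degree_delta_pow)
    then show ?thesis
      using delta_operator_degree_0[OF delta] by simp
  qed
qed simp

lemma delta_pow_neq_0: "q \<noteq> 0 \<Longrightarrow> k \<le> degree q \<Longrightarrow> (d^^k) q \<noteq> 0"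
proof (induction k)
  case (Suc k)
  then show ?case
    using delta_neq_0_and_degree[of "(d^^k) q"] by (simp add: degree_delta_pow)
qed simp

lemma eq_0_if_delta_pow_vanish:
  assumes "degree q \<le> n" and "\<forall>i\<le>n. poly ((d^^i) q) (w i) = 0"
  shows "q = 0"
proof (rule ccontr)
  assume "q \<noteq> 0"
  define r where "r = (d^^degree q) q"
  have "r \<noteq> 0" and "degree r = 0"
    using delta_pow_neq_0[OF \<open>q \<noteq> 0\<close>] by (auto simp: r_def degree_delta_pow)
  moreover have "poly r (w (degree q)) = 0"
    using assms by (simp add: r_def)
  ultimately show False
    by (auto elim!: degree_eq_zeroE)
qed

lemma delta_pow_p: "j \<le> n \<Longrightarrow> (d^^j) (p n) = smult (fact n / fact (n - j)) (p (n - j))"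
proof (induction j)
  case (Suc j)
  have nj: "n - j = Suc (n - Suc j)"
    using Suc.prems by simp
  have "(fact (n - j) :: rat) = of_nat (n - j) * fact (n - Suc j)"
    unfolding nj by (rule fact_Suc)
  then have "fact n / fact (n - j) * of_nat (n - j) = (fact n / fact (n - Suc j) :: rat)"
    by (simp add: nj)
  moreover have "(d^^Suc j) (p n) = smult (fact n / fact (n - j) * of_nat (n - j)) (p (n - Suc j))"
    using Suc delta_p[of "n - j"]
    by (simp add: delta_operator_smult[OF delta] nj del: of_nat_Suc)
  ultimately show ?case
    by simp
qed simp

lemma degree_goncarov_rec: "degree (goncarov_rec p w n) = n"
proof (induction n rule: less_induct)
  case (less n)
  define s where
    "s = (\<Sum>i<n. smult (of_nat (n choose i) * poly (p (n - i)) (w i)) (goncarov_rec p w i))"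
  have "degree (- s) < degree (p n) \<or> s = 0"
  proof (cases n)
    case (Suc m)
    have "degree s \<le> m"
      unfolding s_def using less Suc
      by (intro degree_sum_le) (auto intro: order.trans[OF degree_smult_le])
    then show ?thesis
      by (simp add: Suc)
  qed (simp add: s_def)
  then show ?case
    using degree_add_eq_left[of "- s" "p n"]
    by (subst goncarov_rec.simps) (auto simp flip: s_def)
qed

lemma poly_delta_pow_goncarov_rec:
  "poly ((d^^j) (goncarov_rec p w n)) (w j) = (if j = n then fact n else 0)"
proof (induction n rule: less_induct)
  case (less n)
  define c where "c i = of_nat (n choose i) * poly (p (n - i)) (w i)" for i
  have "poly ((d^^j) (goncarov_rec p w n)) (w j)
      = poly ((d^^j) (p n)) (w j) - (\<Sum>i<n. c i * (if j = i then fact i else 0))"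
    by (subst goncarov_rec.simps)
      (simp add: c_def delta_pow_diff[OF delta] delta_pow_sum[OF delta]
        delta_pow_smult[OF delta] poly_sum less)
  also have "\<dots> = (if j = n then fact n else 0)"
  proof (cases j n rule: linorder_cases)
    case less
    have "poly ((d^^j) (p n)) (w j) = fact j * of_nat (n choose j) * poly (p (n - j)) (w j)"
      using less by (simp add: delta_pow_p fact_binomial)
    then have "poly ((d^^j) (p n)) (w j) = c j * fact j"
      by (simp add: c_def)
    with less show ?thesis
      by (simp add: if_distrib[of "\<lambda>x. c _ * x"] cong: if_cong)
  next
    case equal
    then show ?thesis
      by (simp add: delta_pow_p p_0)
  next
    case greater
    then show ?thesis
      by (simp add: delta_pow_eq_0)
  qed
  finally show ?case .
qed

lemma goncarov_basis_unique:
  assumes "\<forall>n. degree (t n) = n \<and>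
    (\<forall>i. poly ((d^^i) (t n)) (w i) = (if i = n then fact n else 0))"
  shows "goncarov_basis d w = t"
  unfolding goncarov_basis_def
proof (rule the_equality)
  fix t'
  assume t': "\<forall>n. degree (t' n) = n \<and>
    (\<forall>i. poly ((d^^i) (t' n)) (w i) = (if i = n then fact n else 0))"
  show "t' = t"
  proof
    fix n
    have "t' n - t n = 0"
      using assms t'
      by (intro eq_0_if_delta_pow_vanish[of _ n w]) (auto intro: degree_diff_le simp: delta_pow_diff[OF delta])
    then show "t' n = t n"
      by simp
  qed
qed (rule assms)

lemma goncarov_basis_eq_rec: "goncarov_basis d w = goncarov_rec p w"
  by (rule goncarov_basis_unique) (simp add: degree_goncarov_rec poly_delta_pow_goncarov_rec)

lemma p_eq_goncarov_expansion:
  "p n = goncarov_basis d w n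
     + (\<Sum>i<n. smult (of_nat (n choose i) * poly (p (n - i)) (w i)) (goncarov_basis d w i))"
  unfolding goncarov_basis_eq_rec using goncarov_rec.simps[of p w n] by simp

lemma poly_goncarov_basis_shift:
  "poly (goncarov_basis d (\<lambda>i. w i - a) n) y = poly (goncarov_basis d w n) (a + y)"
proof -
  have "goncarov_basis d (\<lambda>i. w i - a) = (\<lambda>n. pcompose (goncarov_basis d w n) [:a, 1:])"
    by (rule goncarov_basis_unique)
      (simp add: goncarov_basis_eq_rec degree_goncarov_rec degree_pcompose
        delta_pow_shift[OF delta] poly_pcompose poly_delta_pow_goncarov_rec)
  then show ?thesis
    by (simp add: poly_pcompose)
qed

end

definition count_final_le :: "(nat \<Rightarrow> nat) \<Rightarrow> nat set \<Rightarrow> nat set \<Rightarrow> int \<Rightarrow> nat" where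
  "count_final_le f S X c = card {s \<in> S. int (final_image f X s) \<le> c}"

text \<open>The \<open>j\<close>-th order statistic of the final images is at most \<open>c\<close> iff more than \<open>j\<close> final
  images are at most \<open>c\<close>; so \<open>ord_count\<close> counts the set \<open>ord_bounded\<close>.\<close>

definition ord_bounded ::
    "(nat set \<Rightarrow> nat set \<Rightarrow> (nat \<Rightarrow> nat) set) \<Rightarrow> nat set \<Rightarrow> nat set \<Rightarrow> (nat \<Rightarrow> int)
      \<Rightarrow> (nat \<Rightarrow> nat) set" where
  "ord_bounded F S X z = {f \<in> F S X. \<forall>j<card S. j < count_final_le f S X (z j)}"

lemma sorted_nth_iff_less_length_filter:
  fixes xs :: "'a::linorder list"
  assumes "sorted xs" "j < length xs" and down_closed: "\<And>a b. a \<le> b \<Longrightarrow> P b \<Longrightarrow> P a"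
  shows "P (xs ! j) \<longleftrightarrow> j < length (filter P xs)"
  using assms(1,2)
proof (induction xs arbitrary: j)
  case (Cons a xs)
  show ?case
  proof (cases "P a")
    case True
    with Cons show ?thesis
      by (cases j) auto
  next
    case False
    then have none: "\<forall>y\<in>set (a # xs). \<not> P y"
      using Cons.prems(1) down_closed by auto
    then have "filter P (a # xs) = []"
      by (simp only: filter_False)
    moreover have "\<not> P ((a # xs) ! j)"
      using none nth_mem[OF Cons.prems(2)] by blast
    ultimately show ?thesis
      by simp
  qed
qed simp

lemma length_filter_sort: "length (filter P (sort xs)) = length (filter P xs)"
  by (metis mset_filter mset_sort size_mset)

lemma ord_count_eq_card_ord_bounded:
  assumes "finite S"
  shows "ord_count F S X z = card (ord_bounded F S X z)"
proof -
  define srt where "srt f = sort (map (final_image f X) (sorted_list_of_set S))" for f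
  have "int (srt f ! j) \<le> z j \<longleftrightarrow> j < count_final_le f S X (z j)" if "j < card S" for f j
  proof -
    have "int (srt f ! j) \<le> z j \<longleftrightarrow> j < length (filter (\<lambda>y. int y \<le> z j) (srt f))"
      by (rule sorted_nth_iff_less_length_filter) (use that in \<open>auto simp: srt_def\<close>)
    also have "length (filter (\<lambda>y. int y \<le> z j) (srt f))
        = length (filter (\<lambda>s. int (final_image f X s) \<le> z j) (sorted_list_of_set S))"
      unfolding srt_def length_filter_sort by (simp add: filter_map comp_def)
    also have "\<dots> = count_final_le f S X (z j)"
      using assms by (simp add: distinct_length_filter count_final_le_def Collect_conj_eq Int_commute)
    finally show ?thesis .
  qed
  then show ?thesis
    unfolding ord_count_def ord_bounded_def srt_def[symmetric]
    by (intro arg_cong[where f = card] Collect_cong) auto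
qed

lemma final_image_eqI:
  assumes "1 \<le> K" "(f^^K) s \<in> X" "\<forall>k. 1 \<le> k \<and> k < K \<longrightarrow> (f^^k) s \<notin> X"
  shows "final_image f X s = (f^^K) s"
proof -
  have "(LEAST k. k \<ge> 1 \<and> (f^^k) s \<in> X) = K"
    by (rule Least_equality) (use assms in \<open>auto simp: not_less[symmetric]\<close>)
  then show ?thesis
    by (simp add: final_image_def)
qed

lemma reluctant_hitting_time:
  assumes "reluctant S X f" and "s \<in> S"
  obtains K where "1 \<le> K" "(f^^K) s \<in> X" "\<forall>k. 1 \<le> k \<and> k < K \<longrightarrow> (f^^k) s \<notin> X"
    "\<forall>k<K. (f^^k) s \<in> S" "final_image f X s = (f^^K) s"
proof -
  define K where "K = (LEAST k. k \<ge> 1 \<and> (f^^k) s \<in> X)"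
  have "1 \<le> K \<and> (f^^K) s \<in> X"
    unfolding K_def by (rule LeastI_ex) (use assms in \<open>auto simp: reluctant_def\<close>)
  then have hit: "1 \<le> K" "(f^^K) s \<in> X"
    by simp_all
  have before: "\<forall>k. 1 \<le> k \<and> k < K \<longrightarrow> (f^^k) s \<notin> X"
    unfolding K_def using not_less_Least by blast
  have f: "f \<in> S \<rightarrow>\<^sub>E S \<union> X"
    using assms(1) by (simp add: reluctant_def)
  have "(f^^k) s \<in> S" if "k < K" for k
    using that
  proof (induction k)
    case (Suc k)
    then have "f ((f^^k) s) \<in> S \<union> X"
      using f by (simp add: PiE_iff)
    moreover have "(f^^Suc k) s \<notin> X"
      using before[rule_format, of "Suc k"] Suc.prems by simp
    ultimately show ?case
      by simp
  qed (use assms(2) in simp)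
  with hit before show thesis
    by (intro that[of K]) (auto simp: final_image_def K_def)
qed

lemma final_image_in:
  assumes "reluctant S X f" "s \<in> S"
  shows "final_image f X s \<in> X"
proof -
  obtain K where "(f^^K) s \<in> X" "final_image f X s = (f^^K) s"
    using reluctant_hitting_time[OF assms] by metis
  then show ?thesis
    by simp
qed

lemma final_image_funpow:
  assumes "(f^^K) s \<in> X" "\<forall>k. 1 \<le> k \<and> k < K \<longrightarrow> (f^^k) s \<notin> X" "k < K"
  shows "final_image f X ((f^^k) s) = (f^^K) s"
proof -
  have shift: "(f^^m) ((f^^k) s) = (f^^(m + k)) s" for m
    by (simp add: funpow_add)
  have "final_image f X ((f^^k) s) = (f^^(K - k)) ((f^^k) s)"
    by (rule final_image_eqI) (use assms in \<open>auto simp: shift\<close>)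
  then show ?thesis
    using assms(3) by (simp add: shift)
qed

lemma funpow_restrict:
  assumes "\<forall>k<K. (f^^k) s \<in> A" "k \<le> K"
  shows "(restrict f A ^^ k) s = (f^^k) s"
  using assms(2) by (induction k) (use assms(1) in auto)

text \<open>The orbit of an element of \<open>A\<close> stays in \<open>A\<close> until it hits \<open>X\<close>, so \<open>f\<close> and its
  restriction to \<open>A\<close> agree along it.\<close>

lemma final_image_restrict:
  assumes f: "reluctant S X f" and "S \<inter> X = {}" "B \<subseteq> X"
    and A: "A = {s \<in> S. final_image f X s \<in> B}" and "s \<in> A"
  shows "final_image (restrict f A) B s = final_image f X s"
proof -
  obtain K where K: "1 \<le> K" "(f^^K) s \<in> X" "\<forall>k. 1 \<le> k \<and> k < K \<longrightarrow> (f^^k) s \<notin> X"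
    "\<forall>k<K. (f^^k) s \<in> S" "final_image f X s = (f^^K) s"
    using reluctant_hitting_time[OF f] \<open>s \<in> A\<close> A by blast
  have orbit: "\<forall>k<K. (f^^k) s \<in> A"
    using K final_image_funpow[OF K(2,3)] \<open>s \<in> A\<close> A by auto
  have "final_image (restrict f A) B s = (restrict f A ^^ K) s"
    using K funpow_restrict[OF orbit] \<open>s \<in> A\<close> A assms(2,3)
    by (intro final_image_eqI) auto
  then show ?thesis
    using K(5) funpow_restrict[OF orbit] by simp
qed

lemma binomial_class_reluctant:
  "binomial_class F \<Longrightarrow> finite S \<Longrightarrow> finite X \<Longrightarrow> S \<inter> X = {} \<Longrightarrow> f \<in> F S X
    \<Longrightarrow> reluctant S X f"
  unfolding binomial_class_def by simp

lemma binomial_class_finite: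
  assumes "binomial_class F" "finite S" "finite X" "S \<inter> X = {}"
  shows "finite (F S X)"
proof (rule finite_subset)
  show "F S X \<subseteq> S \<rightarrow>\<^sub>E S \<union> X"
    using binomial_class_reluctant[OF assms] by (auto simp: reluctant_def)
qed (use assms in \<open>simp add: finite_PiE\<close>)

lemma binomial_class_split:
  assumes "binomial_class F" "finite S" "finite X" "finite Y"
    "S \<inter> X = {}" "S \<inter> Y = {}" "X \<inter> Y = {}"
  shows "bij_betw (\<lambda>f. let A = {s \<in> S. final_image f (X \<union> Y) s \<in> X}
                       in (A, restrict f A, restrict f (S - A)))
          (F S (X \<union> Y)) (SIGMA A:Pow S. F A X \<times> F (S - A) Y)"
  using assms(1) unfolding binomial_class_def
  by (elim conjE) (use assms(2-) in \<open>simp only: simp_thms\<close>)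

lemma card_eq_all_plus_first_failures:
  fixes k :: nat
  assumes "finite U"
  shows "card U = card {u \<in> U. \<forall>j<k. P j u} + (\<Sum>i<k. card {u \<in> U. (\<forall>j<i. P j u) \<and> \<not> P i u})"
proof (induction k)
  case (Suc k)
  have "{u \<in> U. \<forall>j<k. P j u} = {u \<in> U. \<forall>j<Suc k. P j u} \<union> {u \<in> U. (\<forall>j<k. P j u) \<and> \<not> P k u}"
    by (auto simp: less_Suc_eq)
  moreover have "card \<dots> = card {u \<in> U. \<forall>j<Suc k. P j u} + card {u \<in> U. (\<forall>j<k. P j u) \<and> \<not> P k u}"
    by (rule card_Un_disjoint) (use assms in auto)
  ultimately show ?case
    using Suc by simp
qed simp

lemma card_preimage_bij_betw:
  assumes "bij_betw \<phi> A B" "T \<subseteq> B"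
  shows "card {a \<in> A. \<phi> a \<in> T} = card T"
proof -
  have "bij_betw \<phi> {a \<in> A. \<phi> a \<in> T} T"
    by (rule bij_betw_subset[OF assms(1)]) (use assms in \<open>auto simp: bij_betw_def\<close>)
  then show ?thesis
    by (rule bij_betw_same_card)
qed

lemma count_final_le_mono: "finite S \<Longrightarrow> c \<le> c' \<Longrightarrow> count_final_le f S X c \<le> count_final_le f S X c'"
  unfolding count_final_le_def by (intro card_mono) auto

lemma count_final_le_restrict:
  assumes f: "reluctant S {1..x} f" and "S \<inter> {1..x} = {}" "c \<le> x" "c' \<le> int c"
    and A: "A = {s \<in> S. final_image f {1..x} s \<in> {1..c}}"
  shows "count_final_le (restrict f A) A {1..c} c' = count_final_le f S {1..x} c'"
proof -
  have "final_image (restrict f A) {1..c} s = final_image f {1..x} s" if "s \<in> A" for s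
    using final_image_restrict[OF f assms(2) _ A that] assms(3) by auto
  moreover have "s \<in> A" if "s \<in> S" "int (final_image f {1..x} s) \<le> c'" for s
    using final_image_in[OF f that(1)] that assms(4) A by auto
  ultimately show ?thesis
    unfolding count_final_le_def using A by (intro arg_cong[where f = card]) auto
qed

lemma card_split_set:
  assumes f: "reluctant S {1..x} f" and "c \<le> x"
  shows "card {s \<in> S. final_image f {1..x} s \<in> {1..c}} = count_final_le f S {1..x} (int c)"
  unfolding count_final_le_def
  by (intro arg_cong[where f = card]) (use final_image_in[OF f] assms(2) in auto)

text \<open>The left-hand side says that the order statistics first exceed the bound \<open>z\<close> at index \<open>k\<close>;
  as \<open>z\<close> is nondecreasing, exactly \<open>k\<close> final images are then at most \<open>z k\<close>.\<close>

lemma first_failure_iff_split: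
  assumes f: "reluctant S {1..x} f" and S: "finite S" "S \<inter> {1..x} = {}"
    and z: "0 \<le> z k" "z k \<le> int x" "\<forall>j<k. z j \<le> z k"
    and A: "A = {s \<in> S. final_image f {1..x} s \<in> {1..nat (z k)}}"
  shows "(\<forall>j<k. j < count_final_le f S {1..x} (z j)) \<and> \<not> k < count_final_le f S {1..x} (z k)
    \<longleftrightarrow> card A = k \<and> (\<forall>j<card A. j < count_final_le (restrict f A) A {1..nat (z k)} (z j))"
proof -
  let ?N = "\<lambda>j. count_final_le f S {1..x} (z j)"
  have zk: "nat (z k) \<le> x" "int (nat (z k)) = z k"
    using z by auto
  have card_A: "card A = ?N k"
    using card_split_set[OF f zk(1)] A zk(2) by simp
  have restrict: "count_final_le (restrict f A) A {1..nat (z k)} (z j) = ?N j" if "j < k" for j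
    using count_final_le_restrict[OF f S(2) zk(1) _ A] z(3) that zk(2) by simp
  have "(\<forall>j<k. j < ?N j) \<and> \<not> k < ?N k \<longleftrightarrow> ?N k = k \<and> (\<forall>j<k. j < ?N j)"
  proof (cases k)
    case (Suc m)
    have "?N m \<le> ?N k"
      using count_final_le_mono[OF S(1)] z(3) Suc by simp
    with Suc show ?thesis
      by auto
  qed simp
  with restrict show ?thesis
    unfolding card_A by auto
qed

locale counted_binomial_class =
  fixes F :: "nat set \<Rightarrow> nat set \<Rightarrow> (nat \<Rightarrow> nat) set" and p :: "nat \<Rightarrow> rat poly"
  assumes binomial: "binomial_class F"
    and card_F: "finite S \<Longrightarrow> finite X \<Longrightarrow> S \<inter> X = {} \<Longrightarrow>
      of_nat (card (F S X)) = poly (p (card S)) (of_nat (card X))"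
begin

lemma card_Sigma_k_subsets:
  assumes S: "finite S" "card S = n" "k \<le> n" and Y: "finite Y" "S \<inter> Y = {}"
    and B: "\<And>A. A \<subseteq> S \<Longrightarrow> card A = k \<Longrightarrow> finite (B A) \<and> of_nat (card (B A)) = G"
  shows "of_nat (card (SIGMA A:{A. A \<subseteq> S \<and> card A = k}. B A \<times> F (S - A) Y))
    = of_nat (n choose k) * G * poly (p (n - k)) (of_nat (card Y))"
proof -
  let ?\<A> = "{A. A \<subseteq> S \<and> card A = k}"
  have "finite (F (S - A) Y)" if "A \<in> ?\<A>" for A
    using binomial_class_finite[OF binomial] S Y by auto
  moreover have "of_nat (card (F (S - A) Y)) = poly (p (n - k)) (of_nat (card Y))" if "A \<in> ?\<A>" for A
  proof -
    have "card (S - A) = n - k"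
      using that S by (auto simp: card_Diff_subset finite_subset)
    then show ?thesis
      using card_F[of "S - A" Y] S Y by auto
  qed
  ultimately have "of_nat (card (SIGMA A:?\<A>. B A \<times> F (S - A) Y))
      = (\<Sum>A\<in>?\<A>. G * poly (p (n - k)) (of_nat (card Y)))"
    using B S by (simp add: card_cartesian_product)
  also have "\<dots> = of_nat (n choose k) * G * poly (p (n - k)) (of_nat (card Y))"
    using n_subsets[OF S(1), of k] S(2) by simp
  finally show ?thesis .
qed

lemma card_first_failure:
  assumes S: "finite S" "card S = n" "S \<inter> {1..x} = {}" and "k \<le> n"
    and z: "0 \<le> z k" "z k \<le> int x" "\<forall>j<k. z j \<le> z k"
    and ord: "\<And>A. A \<subseteq> S \<Longrightarrow> card A = k \<Longrightarrow> of_nat (ord_count F A {1..nat (z k)} z) = G"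
  shows "of_nat (card {f \<in> F S {1..x}. (\<forall>j<k. j < count_final_le f S {1..x} (z j))
      \<and> \<not> k < count_final_le f S {1..x} (z k)})
    = of_nat (n choose k) * G * poly (p (n - k)) (of_nat x - of_int (z k))"
proof -
  define Xk Yk where "Xk = {1..nat (z k)}" and "Yk = {Suc (nat (z k))..x}"
  define A where "A f = {s \<in> S. final_image f {1..x} s \<in> Xk}" for f
  define \<phi> where "\<phi> f = (A f, restrict f (A f), restrict f (S - A f))" for f
  define \<Sigma> where "\<Sigma> = (SIGMA A:Pow S. F A Xk \<times> F (S - A) Yk)"
  define T where "T = (SIGMA A:{A. A \<subseteq> S \<and> card A = k}. ord_bounded F A Xk z \<times> F (S - A) Yk)"
  have XY: "{1..x} = Xk \<union> Yk"
    using z by (auto simp: Xk_def Yk_def)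
  then have bij: "bij_betw \<phi> (F S {1..x}) \<Sigma>"
    using binomial_class_split[OF binomial S(1), of Xk Yk] S(3)
    unfolding \<phi>_def A_def \<Sigma>_def Let_def by (auto simp: Xk_def Yk_def)
  have "\<phi> f \<in> T \<longleftrightarrow> (\<forall>j<k. j < count_final_le f S {1..x} (z j))
      \<and> \<not> k < count_final_le f S {1..x} (z k)" if "f \<in> F S {1..x}" for f
    using first_failure_iff_split[OF binomial_class_reluctant[OF binomial S(1) _ S(3) that]
        S(1,3) z A_def[of f, unfolded Xk_def]]
      bij_betw_apply[OF bij that]
    by (auto simp: T_def \<phi>_def \<Sigma>_def ord_bounded_def Xk_def)
  then have "{f \<in> F S {1..x}. (\<forall>j<k. j < count_final_le f S {1..x} (z j))
      \<and> \<not> k < count_final_le f S {1..x} (z k)} = {f \<in> F S {1..x}. \<phi> f \<in> T}"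
    by blast
  also have "card \<dots> = card T"
    by (rule card_preimage_bij_betw[OF bij]) (auto simp: T_def \<Sigma>_def ord_bounded_def)
  also have "of_nat (card T) = of_nat (n choose k) * G * poly (p (n - k)) (of_nat (card Yk))"
    unfolding T_def
  proof (rule card_Sigma_k_subsets[OF S(1,2)])
    fix A
    assume A: "A \<subseteq> S" "card A = k"
    then have "finite A"
      using S(1) finite_subset by blast
    have "finite (F A Xk)"
      using binomial_class_finite[OF binomial \<open>finite A\<close>, of Xk] A S XY by (auto simp: Xk_def)
    then have "finite (ord_bounded F A Xk z)"
      by (rule rev_finite_subset) (auto simp: ord_bounded_def)
    moreover have "of_nat (card (ord_bounded F A Xk z)) = G"
      using ord[OF A] by (simp add: ord_count_eq_card_ord_bounded[OF \<open>finite A\<close>] Xk_def)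
    ultimately show "finite (ord_bounded F A Xk z) \<and> of_nat (card (ord_bounded F A Xk z)) = G" ..
  qed (use \<open>k \<le> n\<close> S in \<open>auto simp: Yk_def\<close>)
  also have "(of_nat (card Yk) :: rat) = of_nat x - of_int (z k)"
    using z by (simp add: Yk_def of_nat_diff)
  finally show ?thesis .
qed

end

locale goncarov_counting = delta_basic_sequence + counted_binomial_class
begin

lemma ord_count_eq_goncarov_basis:
  assumes "finite S" "card S = n" "S \<inter> {1..x} = {}"
    and "\<forall>i<n. 1 \<le> z i \<and> z i \<le> int x" "\<forall>i j. i \<le> j \<and> j < n \<longrightarrow> z i \<le> z j"
  shows "of_nat (ord_count F S {1..x} z) = poly (goncarov_basis d (\<lambda>i. - of_int (z i)) n) 0"
  using assms
proof (induction n arbitrary: S x rule: less_induct)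
  case (less n)
  define t where "t k = poly (goncarov_basis d (\<lambda>i. - of_int (z i)) k) 0" for k
  define w :: "nat \<Rightarrow> rat" where "w i = of_nat x - of_int (z i)" for i
  define N where "N f j = count_final_le f S {1..x} (z j)" for f j
  have t_shift: "poly (goncarov_basis d w k) (of_nat x) = t k" for k
    using poly_goncarov_basis_shift[of w "of_nat x" k 0] by (simp add: t_def w_def)
  have "finite (F S {1..x})"
    using binomial_class_finite[OF binomial] less.prems by simp
  then have "card (F S {1..x}) = card {f \<in> F S {1..x}. \<forall>j<n. j < N f j}
      + (\<Sum>k<n. card {f \<in> F S {1..x}. (\<forall>j<k. j < N f j) \<and> \<not> k < N f k})"
    by (rule card_eq_all_plus_first_failures)
  moreover have "of_nat (card {f \<in> F S {1..x}. (\<forall>j<k. j < N f j) \<and> \<not> k < N f k})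
      = of_nat (n choose k) * t k * poly (p (n - k)) (w k)" if "k < n" for k
    unfolding N_def w_def
  proof (rule card_first_failure[OF less.prems(1-3) less_imp_le[OF that]])
    fix A
    assume A: "A \<subseteq> S" "card A = k"
    have "finite A" "A \<inter> {1..nat (z k)} = {}"
      using A less.prems(1,3,4) that finite_subset by fastforce+
    moreover have "\<forall>i<k. 1 \<le> z i \<and> z i \<le> int (nat (z k))"
      using less.prems(4,5) that by force
    ultimately show "of_nat (ord_count F A {1..nat (z k)} z) = t k"
      using less.IH[OF that _ A(2)] less.prems(5) that unfolding t_def by force
  qed (use less.prems(4,5) that in auto)
  ultimately have "of_nat (card (F S {1..x})) = of_nat (ord_count F S {1..x} z)
      + (\<Sum>k<n. of_nat (n choose k) * t k * poly (p (n - k)) (w k))"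
    using less.prems(1,2) by (simp add: ord_count_eq_card_ord_bounded ord_bounded_def N_def)
  moreover have "of_nat (card (F S {1..x})) = t n
      + (\<Sum>k<n. of_nat (n choose k) * t k * poly (p (n - k)) (w k))"
    using card_F[of S "{1..x}"] less.prems p_eq_goncarov_expansion[of n w]
    by (simp add: poly_sum t_shift algebra_simps)
  ultimately show ?case
    by (simp add: t_def)
qed

end

theorem mainTheorem18:
  fixes F :: "nat set \<Rightarrow> nat set \<Rightarrow> (nat \<Rightarrow> nat) set"
    and d :: "rat poly \<Rightarrow> rat poly" and p :: "nat \<Rightarrow> rat poly"
    and x n :: nat and z :: "nat \<Rightarrow> int" and S :: "nat set"
  assumes "binomial_class F"
    and "delta_operator d"
    and "basic_sequence d p"
    and "\<forall>S' X. finite S' \<and> finite X \<and> S' \<inter> X = {} \<longrightarrow>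
           of_nat (card (F S' X)) = poly (p (card S')) (of_nat (card X))"
    and "x > 0"
    and "\<forall>i<n. 1 \<le> z i \<and> z i \<le> int x"
    and "\<forall>i j. i \<le> j \<and> j < n \<longrightarrow> z i \<le> z j"
    and "finite S" and "card S = n" and "S \<inter> {1..x} = {}"
  shows "of_nat (ord_count F S {1..x} z)
           = poly (goncarov_basis d (\<lambda>i. of_nat x - of_int (z i)) n) (of_nat x)
       \<and> poly (goncarov_basis d (\<lambda>i. of_nat x - of_int (z i)) n) (of_nat x)
           = poly (goncarov_basis d (\<lambda>i. - of_int (z i)) n) 0"
proof -
  interpret goncarov_counting d p F
    using assms(1-4) by unfold_locales auto
  have "poly (goncarov_basis d (\<lambda>i. of_nat x - of_int (z i)) n) (of_nat x)
      = poly (goncarov_basis d (\<lambda>i. - of_int (z i)) n) 0"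
    using poly_goncarov_basis_shift[of "\<lambda>i. of_nat x - of_int (z i)" "of_nat x" n 0] by simp
  moreover have "of_nat (ord_count F S {1..x} z) = poly (goncarov_basis d (\<lambda>i. - of_int (z i)) n) 0"
    using ord_count_eq_goncarov_basis assms(6-10) by blast
  ultimately show ?thesis
    by simp
qed

end
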